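(* Let $n\geq 5$, let $S$ be the set of all $3$-cycles in $S_n$, and let $CAG_n=\mathrm{Cay}(A_n,S)$. Let $G_e$ be the set of automorphisms of $CAG_n$ fixing the identity vertex $e$. Let $g\in G_e$ and $\alpha,\beta\in S$ (not necessarily distinct). If $\alpha^g=\beta$, then $(\alpha^{-1})^g=\beta^{-1}$.
   Context: For a finite group $\Gamma$ and a subset $T\subseteq\Gamma$ with $e\notin T$ and $T=T^{-1}$, the Cayley graph $\mathrm{Cay}(\Gamma,T)$ is the undirected graph with vertex set $\Gamma$ and edge set $\{\{\gamma,t\gamma\}\mid \gamma\in\Gamma, t\in T\}$. $x^g$ denotes the image of the vertex $x$ under the automorphism $g$. *)

theory Defs
  imports "HOL-Combinatorics.Permutations"
begin

definition sym_grp :: "nat \<Rightarrow> (nat \<Rightarrow> nat) set" where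
  "sym_grp n = {p. p permutes {1..n}}"

definition alt_grp :: "nat \<Rightarrow> (nat \<Rightarrow> nat) set" where
  "alt_grp n = {p. p permutes {1..n} \<and> evenperm p}"

definition three_cycle :: "nat \<Rightarrow> nat \<Rightarrow> nat \<Rightarrow> nat \<Rightarrow> nat" where
  "three_cycle a b c = (\<lambda>x. if x = a then b else if x = b then c else if x = c then a else x)"

definition three_cycles :: "nat \<Rightarrow> (nat \<Rightarrow> nat) set" where
  "three_cycles n = {three_cycle a b c | a b c.
      a \<in> {1..n} \<and> b \<in> {1..n} \<and> c \<in> {1..n} \<and> a \<noteq> b \<and> b \<noteq> c \<and> a \<noteq> c}"

definition cay_adj :: "('a \<Rightarrow> 'a) set \<Rightarrow> ('a \<Rightarrow> 'a) \<Rightarrow> ('a \<Rightarrow> 'a) \<Rightarrow> bool" where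
  "cay_adj T x y \<longleftrightarrow> (\<exists>t\<in>T. y = t \<circ> x \<or> x = t \<circ> y)"

definition cay_aut_fix_e ::
  "('a \<Rightarrow> 'a) set \<Rightarrow> ('a \<Rightarrow> 'a) set \<Rightarrow> (('a \<Rightarrow> 'a) \<Rightarrow> ('a \<Rightarrow> 'a)) set" where
  "cay_aut_fix_e Gamma T = {g. bij_betw g Gamma Gamma
      \<and> (\<forall>x\<in>Gamma. \<forall>y\<in>Gamma. cay_adj T x y \<longleftrightarrow> cay_adj T (g x) (g y))
      \<and> g id = id}"

end

theory Submission
  imports Defs
begin

text \<open>The identity, a 3-cycle \<alpha> and \<alpha>\<inverse> = \<alpha> \<circ> \<alpha> form a triangle of the Cayley graph
  without a common neighbour. An automorphism g fixing e maps it to a triangle e, \<beta>, y with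
  y a 3-cycle adjacent to \<beta>. Unless y = \<beta>\<inverse>, the 3-cycles y and \<beta> share an oriented pair
  of points, and then (since n \<ge> 5) such a triangle does have a common neighbour,
  contradicting the invariance of common neighbours under g.\<close>

lemma three_cycle_rotate:
  "distinct [a, b, c] \<Longrightarrow> three_cycle a b c = three_cycle b c a"
  by (auto simp: three_cycle_def fun_eq_iff)

lemma three_cycle_as_transpositions:
  "distinct [a, b, c] \<Longrightarrow> three_cycle a b c = transpose a b \<circ> transpose b c"
  by (auto simp: three_cycle_def fun_eq_iff transpose_def)

lemma three_cycle_comp_self:
  "distinct [a, b, c] \<Longrightarrow> three_cycle a b c \<circ> three_cycle a b c = three_cycle c b a"
  by (auto simp: three_cycle_def fun_eq_iff)

lemma inv_three_cycle:
  "distinct [a, b, c] \<Longrightarrow> inv (three_cycle a b c) = three_cycle c b a"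
  by (rule inv_unique_comp) (auto simp: three_cycle_def fun_eq_iff)

lemma three_cyclesE:
  assumes "t \<in> three_cycles n"
  obtains a b c where "t = three_cycle a b c" "distinct [a, b, c]"
    "a \<in> {1..n}" "b \<in> {1..n}" "c \<in> {1..n}"
  using assms unfolding three_cycles_def by auto

lemma three_cyclesI:
  "\<lbrakk>distinct [a, b, c]; a \<in> {1..n}; b \<in> {1..n}; c \<in> {1..n}\<rbrakk>
    \<Longrightarrow> three_cycle a b c \<in> three_cycles n"
  unfolding three_cycles_def by auto

lemma three_cycles_subset_alt_grp: "three_cycles n \<subseteq> alt_grp n"
proof
  fix t assume "t \<in> three_cycles n"
  then obtain a b c where t: "t = three_cycle a b c" "distinct [a, b, c]"
    and "a \<in> {1..n}" "b \<in> {1..n}" "c \<in> {1..n}"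
    by (rule three_cyclesE)
  then have "transpose a b \<circ> transpose b c permutes {1..n}"
    by (intro permutes_compose permutes_swap_id) auto
  moreover have "evenperm (transpose a b \<circ> transpose b c)"
    using t(2) by (simp add: evenperm_comp permutation_swap_id evenperm_swap)
  ultimately show "t \<in> alt_grp n"
    using t three_cycle_as_transpositions by (simp add: alt_grp_def)
qed

lemma inv_in_three_cycles: "t \<in> three_cycles n \<Longrightarrow> inv t \<in> three_cycles n"
  by (erule three_cyclesE) (simp add: inv_three_cycle three_cyclesI)

lemma bij_three_cycle: "t \<in> three_cycles n \<Longrightarrow> bij t"
  using three_cycles_subset_alt_grp[of n] by (auto simp: alt_grp_def permutes_bij)

lemma cay_adj_iff_left_mult:
  assumes "\<And>t. t \<in> T \<Longrightarrow> bij t" and "\<And>t. t \<in> T \<Longrightarrow> inv t \<in> T"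
  shows "cay_adj T x z \<longleftrightarrow> (\<exists>s\<in>T. z = s \<circ> x)"
proof
  assume "cay_adj T x z"
  then obtain t where t: "t \<in> T" "z = t \<circ> x \<or> x = t \<circ> z"
    unfolding cay_adj_def by blast
  have "z = inv t \<circ> x" if "x = t \<circ> z"
    using that assms(1)[OF t(1)] by (simp add: o_assoc bij_is_inj)
  then show "\<exists>s\<in>T. z = s \<circ> x"
    using t assms(2) by blast
qed (auto simp: cay_adj_def)

lemma cay_adj_three_cycles_iff:
  "cay_adj (three_cycles n) x z \<longleftrightarrow> (\<exists>s\<in>three_cycles n. z = s \<circ> x)"
  by (rule cay_adj_iff_left_mult) (simp_all add: bij_three_cycle inv_in_three_cycles)

definition has_common_neighbour ::
  "('a \<Rightarrow> 'a) set \<Rightarrow> ('a \<Rightarrow> 'a) set \<Rightarrow> ('a \<Rightarrow> 'a) \<Rightarrow> ('a \<Rightarrow> 'a) \<Rightarrow> ('a \<Rightarrow> 'a) \<Rightarrow> bool" where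
  "has_common_neighbour Gamma T x y w \<longleftrightarrow>
    (\<exists>z\<in>Gamma. cay_adj T x z \<and> cay_adj T y z \<and> cay_adj T w z)"

lemma has_common_neighbour_aut_iff:
  assumes g: "g \<in> cay_aut_fix_e Gamma T" and "x \<in> Gamma" "y \<in> Gamma" "w \<in> Gamma"
  shows "has_common_neighbour Gamma T (g x) (g y) (g w) \<longleftrightarrow> has_common_neighbour Gamma T x y w"
proof -
  have bij: "bij_betw g Gamma Gamma"
    and adj: "\<And>u v. u \<in> Gamma \<Longrightarrow> v \<in> Gamma \<Longrightarrow> cay_adj T u v \<longleftrightarrow> cay_adj T (g u) (g v)"
    using g unfolding cay_aut_fix_e_def by auto
  have "has_common_neighbour Gamma T (g x) (g y) (g w) \<longleftrightarrow>
      (\<exists>z\<in>g ` Gamma. cay_adj T (g x) z \<and> cay_adj T (g y) z \<and> cay_adj T (g w) z)"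
    using bij by (simp add: has_common_neighbour_def bij_betw_imp_surj_on)
  also have "\<dots> \<longleftrightarrow> has_common_neighbour Gamma T x y w"
    using adj assms(2-4) by (auto simp: has_common_neighbour_def)
  finally show ?thesis .
qed

text \<open>Evaluating the functional equations only at the finitely many named points turns both
  lemmas below into quantifier-free problems over the order on \<open>nat\<close>, which SMT settles.\<close>

lemma three_cycle_not_product_with_both:
  assumes "distinct [a, b, c]" "distinct [p, q, r]" "distinct [u, v, w]" "distinct [u', v', w']"
    and "three_cycle p q r = three_cycle u v w \<circ> three_cycle a b c"
  shows "three_cycle p q r \<noteq> three_cycle u' v' w' \<circ> three_cycle c b a"
proof
  assume "three_cycle p q r = three_cycle u' v' w' \<circ> three_cycle c b a"
  then have "\<forall>x\<in>{a, b, c, p, q, r, u, v, w, u', v', w'}.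
      three_cycle p q r x = three_cycle u v w (three_cycle a b c x) \<and>
      three_cycle p q r x = three_cycle u' v' w' (three_cycle c b a x)"
    using assms(5) by (simp add: fun_eq_iff)
  then show False
    using assms(1-4) unfolding three_cycle_def
    by (simp only: ball_simps distinct.simps list.set insert_iff empty_iff) (smt (z3))
qed

lemma three_cycle_comp_three_cycle_cases:
  assumes "distinct [a, b, c]" "distinct [p, q, r]" "distinct [u, v, w]"
    and "three_cycle p q r = three_cycle u v w \<circ> three_cycle a b c"
  shows "three_cycle p q r = three_cycle c b a
    \<or> (\<exists>d. d \<notin> {a, b, c} \<and> (three_cycle p q r = three_cycle a b d
        \<or> three_cycle p q r = three_cycle b c d \<or> three_cycle p q r = three_cycle c a d))"
proof -
  have "\<forall>x\<in>{a, b, c, p, q, r, u, v, w}.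
      three_cycle p q r x = three_cycle u v w (three_cycle a b c x)"
    using assms(4) by (simp add: fun_eq_iff)
  then have "(p = c \<and> q = b \<and> r = a \<or> q = c \<and> r = b \<and> p = a \<or> r = c \<and> p = b \<and> q = a)
    \<or> (r \<notin> {a, b, c} \<and> (p = a \<and> q = b \<or> p = b \<and> q = c \<or> p = c \<and> q = a))
    \<or> (p \<notin> {a, b, c} \<and> (q = a \<and> r = b \<or> q = b \<and> r = c \<or> q = c \<and> r = a))
    \<or> (q \<notin> {a, b, c} \<and> (r = a \<and> p = b \<or> r = b \<and> p = c \<or> r = c \<and> p = a))"
    using assms(1-3) unfolding three_cycle_def
    by (simp only: ball_simps distinct.simps list.set insert_iff empty_iff) (smt (z3))
  moreover have "three_cycle p q r = three_cycle q r p" "three_cycle p q r = three_cycle r p q"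
    using assms(2) three_cycle_rotate[of p q r] three_cycle_rotate[of q r p] by auto
  ultimately show ?thesis
    by (elim disjE conjE) blast+
qed

lemma no_common_neighbour_three_cycle_inverse:
  assumes "\<alpha> \<in> three_cycles n"
  shows "\<not> has_common_neighbour (alt_grp n) (three_cycles n) id \<alpha> (inv \<alpha>)"
proof
  obtain a b c where \<alpha>: "\<alpha> = three_cycle a b c" "distinct [a, b, c]"
    using assms by (rule three_cyclesE)
  assume "has_common_neighbour (alt_grp n) (three_cycles n) id \<alpha> (inv \<alpha>)"
  then obtain t0 t1 t2 where "t0 \<in> three_cycles n" "t1 \<in> three_cycles n" "t2 \<in> three_cycles n"
    and "t0 = t1 \<circ> \<alpha>" "t0 = t2 \<circ> inv \<alpha>"
    unfolding has_common_neighbour_def cay_adj_three_cycles_iff by (metis comp_id)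
  then show False
    using \<alpha> by (elim three_cyclesE)
      (metis three_cycle_not_product_with_both inv_three_cycle)
qed

lemma common_neighbour_three_cycles_sharing_pair:
  assumes n: "n \<ge> 5" and abc: "distinct [a, b, c]" "a \<in> {1..n}" "b \<in> {1..n}" "c \<in> {1..n}"
    and d: "d \<in> {1..n}" "d \<notin> {a, b, c}"
  shows "has_common_neighbour (alt_grp n) (three_cycles n) id (three_cycle a b c) (three_cycle a b d)"
proof -
  have "\<not> {1..5} \<subseteq> {a, b, c, d}"
  proof
    assume "{1..5} \<subseteq> {a, b, c, d}"
    then have "card {1..5::nat} \<le> card (set [a, b, c, d])" by (intro card_mono) auto
    also have "\<dots> \<le> 4" using card_length[of "[a, b, c, d]"] by simp
    finally show False by simp
  qed
  then obtain f where "f \<in> {1..5}" and f: "f \<notin> {a, b, c, d}"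
    by blast
  with n have "f \<in> {1..n}" by simp
  let ?z = "three_cycle a b f"
  have "?z = three_cycle a c f \<circ> three_cycle a b c" "?z = three_cycle a d f \<circ> three_cycle a b d"
    using f abc d by (auto simp: three_cycle_def fun_eq_iff)
  moreover have "?z \<in> three_cycles n" "three_cycle a c f \<in> three_cycles n"
    "three_cycle a d f \<in> three_cycles n"
    using \<open>f \<in> {1..n}\<close> f abc d by (auto intro!: three_cyclesI)
  ultimately show ?thesis
    using three_cycles_subset_alt_grp
    unfolding has_common_neighbour_def cay_adj_three_cycles_iff by (metis comp_id subsetD)
qed

lemma common_neighbour_adjacent_three_cycles:
  assumes n: "n \<ge> 5" and \<beta>: "\<beta> \<in> three_cycles n" and y: "y \<in> three_cycles n"
    and adj: "cay_adj (three_cycles n) \<beta> y" and ne: "y \<noteq> inv \<beta>"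
  shows "has_common_neighbour (alt_grp n) (three_cycles n) id \<beta> y"
proof -
  obtain a b c where abc: "\<beta> = three_cycle a b c" "distinct [a, b, c]"
    "a \<in> {1..n}" "b \<in> {1..n}" "c \<in> {1..n}"
    using \<beta> by (rule three_cyclesE)
  obtain p q r where pqr: "y = three_cycle p q r" "distinct [p, q, r]"
    "p \<in> {1..n}" "q \<in> {1..n}" "r \<in> {1..n}"
    using y by (rule three_cyclesE)
  obtain s where s: "s \<in> three_cycles n" "y = s \<circ> \<beta>"
    using adj by (auto simp: cay_adj_three_cycles_iff)
  obtain u v w where uvw: "s = three_cycle u v w" "distinct [u, v, w]"
    using s(1) by (rule three_cyclesE)
  have "y = three_cycle c b a \<or> (\<exists>d. d \<notin> {a, b, c} \<and>
      (y = three_cycle a b d \<or> y = three_cycle b c d \<or> y = three_cycle c a d))"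
    using three_cycle_comp_three_cycle_cases[OF abc(2) pqr(2) uvw(2)] pqr(1) s(2) uvw(1) abc(1)
    by simp
  moreover have "y \<noteq> three_cycle c b a"
    using ne abc(1,2) by (simp add: inv_three_cycle)
  ultimately obtain d where d: "d \<notin> {a, b, c}"
    and y_cases: "y = three_cycle a b d \<or> y = three_cycle b c d \<or> y = three_cycle c a d"
    by blast
  have "y d \<noteq> d"
    using y_cases d abc(2) by (auto simp: three_cycle_def)
  then have "d \<in> {1..n}"
    using pqr by (auto simp: three_cycle_def split: if_splits)
  have rotations: "\<beta> = three_cycle b c a" "\<beta> = three_cycle c a b"
    using abc three_cycle_rotate[of a b c] three_cycle_rotate[of b c a] by auto
  from y_cases show ?thesis
  proof (elim disjE)
    assume "y = three_cycle a b d"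
    then show ?thesis
      using common_neighbour_three_cycles_sharing_pair[OF n abc(2-5) \<open>d \<in> {1..n}\<close>] d abc(1)
      by simp
  next
    assume "y = three_cycle b c d"
    then show ?thesis
      using common_neighbour_three_cycles_sharing_pair[OF n _ abc(4,5,3) \<open>d \<in> {1..n}\<close>]
        d abc(2) rotations by auto
  next
    assume "y = three_cycle c a d"
    then show ?thesis
      using common_neighbour_three_cycles_sharing_pair[OF n _ abc(5,3,4) \<open>d \<in> {1..n}\<close>]
        d abc(2) rotations by auto
  qed
qed

theorem lemma3p3:
  fixes n :: nat and g :: "(nat \<Rightarrow> nat) \<Rightarrow> (nat \<Rightarrow> nat)" and \<alpha> \<beta> :: "nat \<Rightarrow> nat"
  assumes "n \<ge> 5"
    and "g \<in> cay_aut_fix_e (alt_grp n) (three_cycles n)"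
    and "\<alpha> \<in> three_cycles n" and "\<beta> \<in> three_cycles n"
    and "g \<alpha> = \<beta>"
  shows "g (inv \<alpha>) = inv \<beta>"
proof (rule ccontr)
  let ?T = "three_cycles n" and ?A = "alt_grp n"
  assume ne: "g (inv \<alpha>) \<noteq> inv \<beta>"
  have adj: "\<And>x y. x \<in> ?A \<Longrightarrow> y \<in> ?A \<Longrightarrow> cay_adj ?T x y \<longleftrightarrow> cay_adj ?T (g x) (g y)"
    and gid: "g id = id"
    using assms(2) unfolding cay_aut_fix_e_def by auto
  have inv\<alpha>: "inv \<alpha> \<in> ?T" using assms(3) by (rule inv_in_three_cycles)
  have A: "id \<in> ?A" "\<alpha> \<in> ?A" "inv \<alpha> \<in> ?A"
    using assms(3) inv\<alpha> three_cycles_subset_alt_grp by (auto simp: alt_grp_def)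
  have "inv \<alpha> = \<alpha> \<circ> \<alpha>"
    using assms(3) by (elim three_cyclesE) (simp add: inv_three_cycle three_cycle_comp_self)
  then have "cay_adj ?T id (inv \<alpha>)" "cay_adj ?T \<alpha> (inv \<alpha>)"
    using assms(3) inv\<alpha> unfolding cay_adj_three_cycles_iff by auto
  then have "cay_adj ?T id (g (inv \<alpha>))" "cay_adj ?T \<beta> (g (inv \<alpha>))"
    using adj A gid assms(5) by auto
  moreover from this(1) have "g (inv \<alpha>) \<in> ?T"
    by (auto simp: cay_adj_three_cycles_iff)
  ultimately have "has_common_neighbour ?A ?T id \<beta> (g (inv \<alpha>))"
    using common_neighbour_adjacent_three_cycles[OF assms(1,4) _ _ ne] by blast
  then have "has_common_neighbour ?A ?T id \<alpha> (inv \<alpha>)"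
    using has_common_neighbour_aut_iff[OF assms(2) A] gid assms(5) by simp
  then show False
    using no_common_neighbour_three_cycle_inverse[OF assms(3)] by contradiction
qed

end
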